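(* Consider a MAP with $n$ phases labelled $1,\dots,n$, irreducible generator $\Lambda=\Lambda_0+\Lambda_1$ with $\Lambda_0$ nonsingular, stationary distribution $\boldsymbol\pi$, and initial phase distribution $\boldsymbol\theta=\boldsymbol\pi$. Then $$\lim_{t\to\infty}\mathrm{Cov}\big(N(t),\varphi(t)\big)=\sum_{i=1}^n i\,\big(\boldsymbol\pi\Lambda_1\Lambda^\sharp\big)_i.$$
   Context: A MAP with $n$ phases is a continuous-time Markov chain $\{(N(t),\varphi(t))\}$ on $\{0,1,2,\dots\}\times\{1,\dots,n\}$ specified by two $n\times n$ matrices: $\Lambda_1\ge0$ (entrywise), whose entry $(\Lambda_1)_{ij}$ is the rate of transitions $(k,i)\to(k+1,j)$, and $\Lambda_0$, with nonnegative off-diagonal entries giving the rates of transitions $(k,i)\to(k,j)$, $i\ne j$, and diagonal entries such that $\Lambda=\Lambda_0+\Lambda_1$ has zero row sums. $N(0)=0$ and $\varphi(0)$ has distribution $\boldsymbol\theta$ (row vector). $\boldsymbol\pi$ is the row vector with $\boldsymbol\pi\Lambda=0$, $\boldsymbol\pi\mathbf1=1$; $\mathbf 1$ is the all-ones column vector. $\Lambda^\sharp:=\int_0^\infty (e^{\Lambda t}-\mathbf 1\boldsymbol\pi)\,dt$ is the Drazin inverse of $\Lambda$. *)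

theory Defs
  imports "HOL-Analysis.Analysis"
begin

fun mat_pow :: "real^'n^'n \<Rightarrow> nat \<Rightarrow> real^'n^'n" where
  "mat_pow A 0 = mat 1"
| "mat_pow A (Suc k) = mat_pow A k ** A"

definition mat_exp :: "real^'n^'n \<Rightarrow> real^'n^'n" where
  "mat_exp A = (\<Sum>k. (1 / fact k) *\<^sub>R mat_pow A k)"

definition is_MAP :: "real^'n^'n \<Rightarrow> real^'n^'n \<Rightarrow> bool" where
  "is_MAP L0 L1 \<longleftrightarrow>
     (\<forall>i j. L1 $ i $ j \<ge> 0) \<and>
     (\<forall>i j. i \<noteq> j \<longrightarrow> L0 $ i $ j \<ge> 0) \<and>
     (\<forall>i. (\<Sum>j\<in>UNIV. (L0 + L1) $ i $ j) = 0)"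

definition irreducible_gen :: "real^'n^'n \<Rightarrow> bool" where
  "irreducible_gen L \<longleftrightarrow>
     (\<forall>i j. i \<noteq> j \<longrightarrow> (i, j) \<in> {(a, b). a \<noteq> b \<and> L $ a $ b > 0}\<^sup>+)"

definition drazin :: "real^'n^'n \<Rightarrow> real^'n \<Rightarrow> real^'n^'n" where
  "drazin L p = integral {0..} (\<lambda>t. mat_exp (t *\<^sub>R L) - (\<chi> i j. p $ j))"

text \<open>Transition matrices of the MAP: (map_P L0 L1 k t) $ i $ j is the probability of
  N(t)=k and phase(t)=j given phase(0)=i (and N(0)=0); they are the solution of
  the forward equations P_0' = P_0 L0, P_k' = P_k L0 + P_{k-1} L1.\<close>
fun map_P :: "real^'n^'n \<Rightarrow> real^'n^'n \<Rightarrow> nat \<Rightarrow> real \<Rightarrow> real^'n^'n" where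
  "map_P L0 L1 0 t = mat_exp (t *\<^sub>R L0)"
| "map_P L0 L1 (Suc k) t =
     integral {0..t} (\<lambda>s. map_P L0 L1 k s ** L1 ** mat_exp ((t - s) *\<^sub>R L0))"

definition map_joint :: "real^'n^'n \<Rightarrow> real^'n^'n \<Rightarrow> real^'n \<Rightarrow> real \<Rightarrow> nat \<Rightarrow> 'n \<Rightarrow> real" where
  "map_joint L0 L1 \<theta> t k j = (\<theta> v* map_P L0 L1 k t) $ j"

text \<open>Cov(N(t), phase(t)), with phase j carrying the numeric label lab j.\<close>
definition map_cov :: "real^'n^'n \<Rightarrow> real^'n^'n \<Rightarrow> real^'n \<Rightarrow> ('n \<Rightarrow> nat) \<Rightarrow> real \<Rightarrow> real" where
  "map_cov L0 L1 \<theta> lab t =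
     (\<Sum>k. \<Sum>j\<in>UNIV. real k * real (lab j) * map_joint L0 L1 \<theta> t k j)
     - (\<Sum>k. \<Sum>j\<in>UNIV. real k * map_joint L0 L1 \<theta> t k j)
       * (\<Sum>k. \<Sum>j\<in>UNIV. real (lab j) * map_joint L0 L1 \<theta> t k j)"

end

theory Submission
  imports Defs
begin

text \<open>
  Write \<open>P\<^sub>k(t)\<close> for the matrix of probabilities of \<open>k\<close> arrivals by time \<open>t\<close>
  jointly with the phase at time \<open>t\<close>. Its sum \<open>S(t) = \<Sum>\<^sub>k P\<^sub>k(t)\<close> and first moment
  \<open>M(t) = \<Sum>\<^sub>k k P\<^sub>k(t)\<close> solve \<open>S' = S \<Lambda>\<close> and \<open>M' = M \<Lambda> + S \<Lambda>\<^sub>1\<close>, so for the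
  stationary start \<open>\<pi> S(t) = \<pi>\<close> and
  \<open>\<pi> M(t) = \<pi> \<Lambda>\<^sub>1 \<integral>\<^sub>0\<^sup>t e\<^sup>v\<^sup>\<Lambda> dv = t (\<pi> \<Lambda>\<^sub>1 \<one>) \<pi> + \<pi> \<Lambda>\<^sub>1 D(t)\<close> with
  \<open>D(t) = \<integral>\<^sub>0\<^sup>t (e\<^sup>v\<^sup>\<Lambda> - \<one> \<pi>) dv\<close>. Since \<open>D(t)\<close> has zero row sums, the part of the
  covariance that grows linearly in \<open>t\<close> cancels, leaving \<open>\<Sum>\<^sub>i i (\<pi> \<Lambda>\<^sub>1 D(t))\<^sub>i\<close>.
  Finally \<open>D(t)\<close> converges to \<open>\<Lambda>\<^sup>\<sharp>\<close> because \<open>e\<^sup>t\<^sup>\<Lambda>\<close> converges to \<open>\<one> \<pi>\<close>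
  exponentially fast: by irreducibility \<open>e\<^sup>\<Lambda>\<close> is a stochastic matrix with positive
  entries, and Doeblin's contraction argument applies to its powers.
\<close>

section \<open>Square matrices as a Banach algebra\<close>

lemma abs_matrix_entry_le_norm: "\<bar>(A::real^'n^'m) $ i $ j\<bar> \<le> norm A"
  using component_le_norm_cart[of "A $ i" j] Finite_Cartesian_Product.norm_nth_le[of A i] by linarith

lemma norm_matrix_le_sum_abs: "norm (A::real^'n^'m) \<le> (\<Sum>i\<in>UNIV. \<Sum>j\<in>UNIV. \<bar>A $ i $ j\<bar>)"
proof -
  have "norm A \<le> (\<Sum>i\<in>UNIV. norm (A $ i))"
    unfolding norm_vec_def by (rule L2_set_le_sum) simp
  also have "\<dots> \<le> (\<Sum>i\<in>UNIV. \<Sum>j\<in>UNIV. \<bar>A $ i $ j\<bar>)"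
    by (intro sum_mono norm_le_l1_cart)
  finally show ?thesis .
qed

lemma norm_matrix_le_entry_bound:
  fixes A :: "real^'n^'m"
  assumes "\<And>i j. \<bar>A $ i $ j\<bar> \<le> c"
  shows "norm A \<le> real CARD('m) * real CARD('n) * c"
proof -
  have "(\<Sum>i\<in>UNIV. \<Sum>j\<in>UNIV. \<bar>A $ i $ j\<bar>) \<le> (\<Sum>i\<in>(UNIV::'m set). \<Sum>j\<in>(UNIV::'n set). c)"
    by (intro sum_mono assms)
  then show ?thesis
    using norm_matrix_le_sum_abs[of A] by simp
qed

lemma norm_matrix_le_onorm: "norm (A::real^'n^'m) \<le> real CARD('m) * real CARD('n) * onorm ((*v) A)"
  by (intro norm_matrix_le_entry_bound matrix_component_le_onorm)

lemma onorm_matrix_le_norm: "onorm ((*v) (A::real^'n^'m)) \<le> real CARD('m) * real CARD('n) * norm A"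
proof -
  have "(\<Sum>i\<in>UNIV. \<Sum>j\<in>UNIV. \<bar>A $ i $ j\<bar>) \<le> (\<Sum>i\<in>(UNIV::'m set). \<Sum>j\<in>(UNIV::'n set). norm A)"
    by (intro sum_mono abs_matrix_entry_le_norm)
  then show ?thesis
    using onorm_le_matrix_component_sum[of A] by simp
qed

lemma matrix_matrix_mult_bounded_bilinear:
  "bounded_bilinear ((**) :: real^'n^'m \<Rightarrow> real^'p^'n \<Rightarrow> real^'p^'m)"
  by (rule bilinear_conv_bounded_bilinear[THEN iffD1])
    (auto simp: bilinear_def matrix_add_ldistrib matrix_scalar_ac scalar_matrix_assoc
      vec_eq_iff matrix_matrix_mult_def sum.distrib sum_distrib_left algebra_simps intro!: linearI)

lemma vector_matrix_mult_bounded_bilinear: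
  "bounded_bilinear ((v*) :: real^'m \<Rightarrow> real^'n^'m \<Rightarrow> real^'n)"
  by (rule bilinear_conv_bounded_bilinear[THEN iffD1])
    (auto simp: bilinear_def vector_matrix_left_distrib vector_matrix_mult_add_rdistrib
      scaleR_vector_matrix_assoc vector_scaleR_matrix_ac intro!: linearI)

lemma bounded_linear_matrix_vector_mult_left: "bounded_linear (\<lambda>A::real^'n^'m. A *v x)"
  by (auto simp: linear_conv_bounded_linear[symmetric] matrix_vector_mult_add_rdistrib
      scaleR_matrix_vector_assoc intro!: linearI)

lemma matrix_add_rdistrib: "((A::real^'n^'m) + B) ** C = A ** C + B ** C"
  using bounded_bilinear.add_left[OF matrix_matrix_mult_bounded_bilinear] .

lemma onorm_matrix_add_le:
  "onorm ((*v) (A + B)) \<le> onorm ((*v) A) + onorm ((*v) (B::real^'n^'m))"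
proof -
  have "(*v) (A + B) = (\<lambda>x. A *v x + B *v x)"
    by (simp add: fun_eq_iff matrix_vector_mult_add_rdistrib)
  then show ?thesis
    by (simp add: onorm_triangle)
qed

lemma onorm_matrix_scaleR: "onorm ((*v) (r *\<^sub>R A)) = \<bar>r\<bar> * onorm ((*v) (A::real^'n^'m))"
proof -
  have "(*v) (r *\<^sub>R A) = (\<lambda>x. r *\<^sub>R (A *v x))"
    by (simp add: fun_eq_iff scaleR_matrix_vector_assoc)
  then show ?thesis
    by (simp add: onorm_scaleR)
qed

lemma onorm_matrix_mult_le:
  fixes A :: "real^'n^'m" and B :: "real^'p^'n"
  shows "onorm ((*v) (A ** B)) \<le> onorm ((*v) A) * onorm ((*v) B)"
proof -
  have "(*v) (A ** B) = (*v) A \<circ> (*v) B"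
    by (simp add: fun_eq_iff matrix_vector_mul_assoc)
  then show ?thesis
    by (simp add: onorm_compose)
qed

lemma onorm_mat_one: "onorm ((*v) (mat 1 :: real^'n^'n)) = 1"
proof -
  have "(*v) (mat 1 :: real^'n^'n) = (\<lambda>x. x)"
    by (simp add: fun_eq_iff)
  then show ?thesis
    by (simp add: onorm_id)
qed

text \<open>A copy of the square matrices, normed by the operator norm, is a Banach algebra; on it
  the library's \<open>exp\<close> is available and agrees with \<open>mat_exp\<close> (\<open>mat_exp_conv_exp\<close>).\<close>

typedef (overloaded) ('n::finite) sqmat = "UNIV :: (real^'n^'n) set"
  morphisms mat_of_sqmat sqmat_of_mat
  by simp

setup_lifting type_definition_sqmat

instantiation sqmat :: (finite) real_normed_algebra_1
begin

lift_definition zero_sqmat :: "'a sqmat" is 0 .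
lift_definition one_sqmat :: "'a sqmat" is "mat 1" .
lift_definition plus_sqmat :: "'a sqmat \<Rightarrow> 'a sqmat \<Rightarrow> 'a sqmat" is "(+)" .
lift_definition minus_sqmat :: "'a sqmat \<Rightarrow> 'a sqmat \<Rightarrow> 'a sqmat" is "(-)" .
lift_definition uminus_sqmat :: "'a sqmat \<Rightarrow> 'a sqmat" is uminus .
lift_definition times_sqmat :: "'a sqmat \<Rightarrow> 'a sqmat \<Rightarrow> 'a sqmat" is "(**)" .
lift_definition scaleR_sqmat :: "real \<Rightarrow> 'a sqmat \<Rightarrow> 'a sqmat" is "(*\<^sub>R)" .
lift_definition norm_sqmat :: "'a sqmat \<Rightarrow> real" is "\<lambda>A. onorm ((*v) A)" .

definition sgn_sqmat :: "'a sqmat \<Rightarrow> 'a sqmat"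
  where "sgn_sqmat a = inverse (norm a) *\<^sub>R a"
definition dist_sqmat :: "'a sqmat \<Rightarrow> 'a sqmat \<Rightarrow> real"
  where "dist_sqmat a b = norm (a - b)"
definition uniformity_sqmat :: "('a sqmat \<times> 'a sqmat) filter"
  where "uniformity_sqmat = (INF e\<in>{0 <..}. principal {(x, y). dist x y < e})"
definition open_sqmat :: "'a sqmat set \<Rightarrow> bool"
  where "open_sqmat U = (\<forall>x\<in>U. \<forall>\<^sub>F (x', y) in uniformity. x' = x \<longrightarrow> y \<in> U)"

instance
proof
  fix a b c :: "'a sqmat" and r s :: real
  show "a + b + c = a + (b + c)" "a + b = b + a" "0 + a = a" "- a + a = 0" "a - b = a + - b"
    by (transfer; simp add: algebra_simps)+
  show "r *\<^sub>R (a + b) = r *\<^sub>R a + r *\<^sub>R b" "(r + s) *\<^sub>R a = r *\<^sub>R a + s *\<^sub>R a"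
    "r *\<^sub>R s *\<^sub>R a = (r * s) *\<^sub>R a" "1 *\<^sub>R a = a"
    by (transfer; simp add: algebra_simps)+
  show "a * b * c = a * (b * c)" "1 * a = a" "a * 1 = a"
    by (transfer; simp add: matrix_mul_assoc)+
  show "(a + b) * c = a * c + b * c" "a * (b + c) = a * b + a * c"
    by (transfer; simp add: matrix_add_rdistrib matrix_add_ldistrib)+
  show "r *\<^sub>R a * b = r *\<^sub>R (a * b)" "a * r *\<^sub>R b = r *\<^sub>R (a * b)"
    by (transfer; simp add: matrix_scalar_ac scalar_matrix_assoc)+
  show "(0::'a sqmat) \<noteq> 1"
    by transfer (simp add: vec_eq_iff mat_def)
  show "norm (a + b) \<le> norm a + norm b"
    by transfer (rule onorm_matrix_add_le)
  show "norm (r *\<^sub>R a) = \<bar>r\<bar> * norm a"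
    by transfer (rule onorm_matrix_scaleR)
  show "norm (a * b) \<le> norm a * norm b"
    by transfer (rule onorm_matrix_mult_le)
  show "norm (1::'a sqmat) = 1"
    by transfer (rule onorm_mat_one)
  show "(norm a = 0) = (a = 0)"
    by transfer (simp add: onorm_eq_0 matrix_eq)
qed (simp_all add: sgn_sqmat_def dist_sqmat_def uniformity_sqmat_def open_sqmat_def)

end

lemma bounded_linear_mat_of_sqmat: "bounded_linear (mat_of_sqmat :: 'n::finite sqmat \<Rightarrow> _)"
proof
  show "\<exists>K. \<forall>a::'n::finite sqmat. norm (mat_of_sqmat a) \<le> norm a * K"
    by (intro exI[of _ "real CARD('n) * real CARD('n)"] allI, transfer)
      (metis norm_matrix_le_onorm mult.commute)
qed (transfer; simp)+

lemma bounded_linear_sqmat_of_mat: "bounded_linear (sqmat_of_mat :: _ \<Rightarrow> 'n::finite sqmat)"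
proof
  show "\<exists>K. \<forall>A::real^'n^'n. norm (sqmat_of_mat A) \<le> norm A * K"
    by (intro exI[of _ "real CARD('n) * real CARD('n)"] allI, transfer)
      (metis onorm_matrix_le_norm mult.commute)
qed (transfer; simp)+

instance sqmat :: (finite) banach
proof
  fix X :: "nat \<Rightarrow> 'a sqmat"
  assume "Cauchy X"
  then have "Cauchy (\<lambda>n. mat_of_sqmat (X n))"
    by (rule bounded_linear.Cauchy[OF bounded_linear_mat_of_sqmat])
  then obtain L where "(\<lambda>n. mat_of_sqmat (X n)) \<longlonglongrightarrow> L"
    using Cauchy_convergent_iff convergent_def by blast
  then have "(\<lambda>n. sqmat_of_mat (mat_of_sqmat (X n))) \<longlonglongrightarrow> sqmat_of_mat L"
    by (rule bounded_linear.tendsto[OF bounded_linear_sqmat_of_mat])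
  then show "convergent X"
    by (auto simp: convergent_def mat_of_sqmat_inverse)
qed

section \<open>The matrix exponential\<close>

lemma mat_of_sqmat_power: "mat_of_sqmat (a ^ k) = mat_pow (mat_of_sqmat a) k"
  by (induction k) (simp_all add: one_sqmat.rep_eq times_sqmat.rep_eq power_Suc2 del: power_Suc)

lemma sqmat_of_mat_zero: "sqmat_of_mat 0 = 0"
  and sqmat_of_mat_one: "sqmat_of_mat (mat 1) = 1"
  and sqmat_of_mat_add: "sqmat_of_mat (A + B) = sqmat_of_mat A + sqmat_of_mat B"
  and sqmat_of_mat_scaleR: "sqmat_of_mat (r *\<^sub>R A) = r *\<^sub>R sqmat_of_mat A"
  by (simp_all add: zero_sqmat.abs_eq one_sqmat.abs_eq plus_sqmat.abs_eq scaleR_sqmat.abs_eq)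

lemma sums_mat_of_sqmat_exp:
  "(\<lambda>k. (1 / fact k) *\<^sub>R mat_pow A k) sums mat_of_sqmat (exp (sqmat_of_mat A))"
proof -
  have "(\<lambda>k. (1 / fact k) *\<^sub>R sqmat_of_mat A ^ k) sums exp (sqmat_of_mat A)"
    using exp_converges[of "sqmat_of_mat A"] by (simp add: divide_inverse_commute)
  from bounded_linear.sums[OF bounded_linear_mat_of_sqmat this]
  show ?thesis
    by (simp add: scaleR_sqmat.rep_eq mat_of_sqmat_power sqmat_of_mat_inverse)
qed

lemma mat_exp_conv_exp: "mat_exp A = mat_of_sqmat (exp (sqmat_of_mat A))"
  unfolding mat_exp_def using sums_mat_of_sqmat_exp by (rule sums_unique[symmetric])

lemma mat_exp_sums: "(\<lambda>k. (1 / fact k) *\<^sub>R mat_pow A k) sums mat_exp A"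
  unfolding mat_exp_conv_exp by (rule sums_mat_of_sqmat_exp)

lemma mat_exp_zero [simp]: "mat_exp 0 = mat 1"
  by (simp add: mat_exp_conv_exp sqmat_of_mat_zero one_sqmat.rep_eq)

lemma mat_exp_add: "mat_exp ((s + t) *\<^sub>R A) = mat_exp (s *\<^sub>R A) ** mat_exp (t *\<^sub>R A)"
proof -
  have "exp ((s + t) *\<^sub>R sqmat_of_mat A) = exp (s *\<^sub>R sqmat_of_mat A) * exp (t *\<^sub>R sqmat_of_mat A)"
    by (simp add: scaleR_add_left exp_add_commuting)
  then show ?thesis
    by (simp add: mat_exp_conv_exp times_sqmat.rep_eq sqmat_of_mat_scaleR)
qed

lemma mat_exp_scaleR_commute: "mat_exp (t *\<^sub>R A) ** A = A ** mat_exp (t *\<^sub>R A)"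
proof -
  have "exp (t *\<^sub>R a) * a = a * exp (t *\<^sub>R a)" for a :: "'n::finite sqmat"
    using exp_times_arg_commute[of "t *\<^sub>R a"]
    by (cases "t = 0") (simp_all add: mult_scaleR_left mult_scaleR_right)
  from arg_cong[OF this[of "sqmat_of_mat A"], of mat_of_sqmat] show ?thesis
    by (simp add: mat_exp_conv_exp sqmat_of_mat_scaleR times_sqmat.rep_eq sqmat_of_mat_inverse)
qed

lemma mat_exp_has_vector_derivative:
  "((\<lambda>t. mat_exp (t *\<^sub>R A)) has_vector_derivative mat_exp (t *\<^sub>R A) ** A) (at t within S)"
proof -
  have "((\<lambda>t. mat_of_sqmat (exp (t *\<^sub>R sqmat_of_mat A))) has_vector_derivative
      mat_of_sqmat (exp (t *\<^sub>R sqmat_of_mat A) * sqmat_of_mat A)) (at t within S)"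
    by (rule bounded_linear.has_vector_derivative[OF bounded_linear_mat_of_sqmat
          exp_scaleR_has_vector_derivative_right])
  then show ?thesis
    by (simp add: mat_exp_conv_exp sqmat_of_mat_scaleR times_sqmat.rep_eq sqmat_of_mat_inverse)
qed

lemma continuous_on_mat_exp: "continuous_on S (\<lambda>t. mat_exp (t *\<^sub>R A))"
  by (rule continuous_on_vector_derivative) (rule mat_exp_has_vector_derivative)

lemma mat_exp_diff: "mat_exp ((t - s) *\<^sub>R A) = mat_exp ((- s) *\<^sub>R A) ** mat_exp (t *\<^sub>R A)"
  using mat_exp_add[of "- s" t A] by simp

lemma mat_exp_uminus_mult: "mat_exp (- (t *\<^sub>R A)) ** mat_exp (t *\<^sub>R A) = mat 1"
  using mat_exp_diff[of t t A] by simp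

lemma mat_exp_shift_diagonal:
  "mat_exp (t *\<^sub>R (A + c *\<^sub>R mat 1)) = exp (t * c) *\<^sub>R mat_exp (t *\<^sub>R A)"
proof -
  let ?a = "sqmat_of_mat (t *\<^sub>R A)"
  have shift: "sqmat_of_mat (t *\<^sub>R (A + c *\<^sub>R mat 1)) = ?a + of_real (t * c)"
    by (simp only: sqmat_of_mat_scaleR sqmat_of_mat_add sqmat_of_mat_one scaleR_add_right scaleR_scaleR
        of_real_def)
  have "exp (?a + of_real (t * c)) = exp ?a * exp (of_real (t * c))"
    by (rule exp_add_commuting) (simp only: of_real_def mult_scaleR_right mult_scaleR_left mult_1_left
        mult_1_right)
  also have "\<dots> = exp (t * c) *\<^sub>R exp ?a"
    by (subst exp_of_real) (simp only: of_real_def mult_scaleR_right mult_1_right)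
  finally have "exp (sqmat_of_mat (t *\<^sub>R (A + c *\<^sub>R mat 1))) = exp (t * c) *\<^sub>R exp ?a"
    unfolding shift .
  then show ?thesis
    unfolding mat_exp_conv_exp by (simp only: scaleR_sqmat.rep_eq)
qed

lemma mat_pow_mult_one_vector: "A *v 1 = 0 \<Longrightarrow> mat_pow A k *v 1 = (if k = 0 then 1 else 0)"
  by (induction k) (auto simp: matrix_vector_mul_assoc[symmetric])

lemma vector_mat_pow_mult: "p v* A = 0 \<Longrightarrow> p v* mat_pow A k = (if k = 0 then p else 0)"
  by (induction k) (auto simp: vector_matrix_mul_assoc[symmetric])

lemma mat_exp_mult_one_vector: "A *v 1 = 0 \<Longrightarrow> mat_exp A *v 1 = 1"
proof -
  assume "A *v 1 = 0"
  then have "(\<lambda>k. ((1 / fact k) *\<^sub>R mat_pow A k) *v 1) = (\<lambda>k. if k = 0 then 1 else 0)"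
    by (simp add: fun_eq_iff scaleR_matrix_vector_assoc[symmetric] mat_pow_mult_one_vector)
  then have "(\<lambda>k. ((1 / fact k) *\<^sub>R mat_pow A k) *v 1) sums 1"
    using sums_single[of 0 "\<lambda>_. 1 :: real^'n"] by simp
  moreover have "(\<lambda>k. ((1 / fact k) *\<^sub>R mat_pow A k) *v 1) sums (mat_exp A *v 1)"
    by (rule bounded_linear.sums[OF bounded_linear_matrix_vector_mult_left mat_exp_sums])
  ultimately show ?thesis
    by (rule sums_unique2[symmetric])
qed

section \<open>Exponential ergodicity of irreducible generators\<close>

lemma vector_mat_exp_stationary: "p v* A = 0 \<Longrightarrow> p v* mat_exp A = p"
proof -
  assume "p v* A = 0"
  then have "(\<lambda>k. p v* ((1 / fact k) *\<^sub>R mat_pow A k)) = (\<lambda>k. if k = 0 then p else 0)"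
    by (simp add: fun_eq_iff vector_scaleR_matrix_ac vector_mat_pow_mult)
  then have "(\<lambda>k. p v* ((1 / fact k) *\<^sub>R mat_pow A k)) sums p"
    using sums_single[of 0 "\<lambda>_. p"] by simp
  moreover have "(\<lambda>k. p v* ((1 / fact k) *\<^sub>R mat_pow A k)) sums (p v* mat_exp A)"
    by (rule bounded_linear.sums[OF bounded_bilinear.bounded_linear_right
          [OF vector_matrix_mult_bounded_bilinear] mat_exp_sums])
  ultimately show ?thesis
    by (rule sums_unique2[symmetric])
qed

lemma mat_pow_nonneg: "(\<And>i j. 0 \<le> A $ i $ j) \<Longrightarrow> 0 \<le> mat_pow A k $ i $ j"
  by (induction k arbitrary: j) (auto simp: mat_def matrix_matrix_mult_def intro!: sum_nonneg)

lemma mat_pow_le_mat_exp: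
  assumes "\<And>i j. 0 \<le> A $ i $ j"
  shows "mat_pow A m $ i $ j / fact m \<le> mat_exp A $ i $ j"
proof -
  have "(\<lambda>k. mat_pow A k $ i $ j / fact k) sums mat_exp A $ i $ j"
    using bounded_linear.sums[OF bounded_linear_vec_nth bounded_linear.sums[OF bounded_linear_vec_nth
          mat_exp_sums[of A]]] by simp
  moreover from this have "(\<Sum>k\<in>{m}. mat_pow A k $ i $ j / fact k) \<le> (\<Sum>k. mat_pow A k $ i $ j / fact k)"
    by (intro sum_le_suminf) (auto simp: sums_iff mat_pow_nonneg[OF assms])
  ultimately show ?thesis
    by (simp add: sums_iff)
qed

lemma mat_exp_nonneg:
  assumes "\<And>i j. 0 \<le> A $ i $ j"
  shows "0 \<le> mat_exp A $ i $ j"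
  by (rule order_trans[OF _ mat_pow_le_mat_exp[OF assms, of 0]]) (simp add: mat_def)

lemma irreducible_gen_mat_pow_pos:
  assumes irr: "irreducible_gen G" and nonneg: "\<And>i j. 0 \<le> Q $ i $ j"
    and off_diag: "\<And>i j. i \<noteq> j \<Longrightarrow> Q $ i $ j = G $ i $ j"
  shows "\<exists>m. 0 < mat_pow Q m $ i $ j"
proof (cases "i = j")
  case True
  then show ?thesis
    by (intro exI[of _ 0]) (simp add: mat_def)
next
  case False
  with irr have "(i, j) \<in> {(a, b). a \<noteq> b \<and> G $ a $ b > 0}\<^sup>+"
    by (simp add: irreducible_gen_def)
  then show ?thesis
  proof (induction rule: trancl_induct)
    case (base y)
    then show ?case
      using off_diag by (intro exI[of _ 1]) simp
  next
    case (step y z)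
    then obtain m where m: "0 < mat_pow Q m $ i $ y"
      by blast
    have "mat_pow Q m $ i $ y * Q $ y $ z \<le> (\<Sum>k\<in>UNIV. mat_pow Q m $ i $ k * Q $ k $ z)"
      by (rule member_le_sum) (simp_all add: mat_pow_nonneg nonneg)
    moreover have "0 < mat_pow Q m $ i $ y * Q $ y $ z"
      using m step off_diag by simp
    ultimately have "0 < mat_pow Q (Suc m) $ i $ z"
      by (simp add: matrix_matrix_mult_def)
    then show ?case
      by blast
  qed
qed

lemma generator_shift_nonneg:
  fixes G :: "real^'n^'n"
  assumes "\<And>i j. i \<noteq> j \<Longrightarrow> 0 \<le> G $ i $ j"
  obtains c where "\<And>i j. 0 \<le> (G + c *\<^sub>R mat 1) $ i $ j"
    and "\<And>t. mat_exp (t *\<^sub>R G) = exp (- t * c) *\<^sub>R mat_exp (t *\<^sub>R (G + c *\<^sub>R mat 1))"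
proof
  define c where "c = (\<Sum>i\<in>UNIV. \<bar>G $ i $ i\<bar>)"
  show "0 \<le> (G + c *\<^sub>R mat 1) $ i $ j" for i j
  proof (cases "i = j")
    case True
    have "\<bar>G $ i $ i\<bar> \<le> c"
      unfolding c_def by (rule member_le_sum) auto
    with True show ?thesis
      by (simp add: mat_def)
  qed (simp add: mat_def assms)
  show "mat_exp (t *\<^sub>R G) = exp (- t * c) *\<^sub>R mat_exp (t *\<^sub>R (G + c *\<^sub>R mat 1))" for t
  proof -
    have "G + c *\<^sub>R mat 1 + (- c) *\<^sub>R mat 1 = G"
      by (simp only: scaleR_minus_left add.assoc add.right_inverse add_0_right)
    then show ?thesis
      using mat_exp_shift_diagonal[of t "G + c *\<^sub>R mat 1" "- c"] by (simp only: mult_minus_right mult_minus_left)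
  qed
qed

lemma generator_mat_exp_nonneg:
  assumes "\<And>i j. i \<noteq> j \<Longrightarrow> 0 \<le> G $ i $ j" and "0 \<le> t"
  shows "0 \<le> mat_exp (t *\<^sub>R G) $ i $ j"
proof -
  obtain c where nonneg: "\<And>i j. 0 \<le> (G + c *\<^sub>R mat 1) $ i $ j"
    and shift: "\<And>t. mat_exp (t *\<^sub>R G) = exp (- t * c) *\<^sub>R mat_exp (t *\<^sub>R (G + c *\<^sub>R mat 1))"
    using generator_shift_nonneg[OF assms(1)] by blast
  have "0 \<le> mat_exp (t *\<^sub>R (G + c *\<^sub>R mat 1)) $ i $ j"
    by (rule mat_exp_nonneg) (use mult_nonneg_nonneg[OF \<open>0 \<le> t\<close> nonneg] in simp)
  then show ?thesis
    by (simp add: shift)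
qed

lemma irreducible_generator_mat_exp_pos:
  assumes "\<And>i j. i \<noteq> j \<Longrightarrow> 0 \<le> G $ i $ j" and "irreducible_gen G"
  shows "0 < mat_exp G $ i $ j"
proof -
  obtain c where nonneg: "\<And>i j. 0 \<le> (G + c *\<^sub>R mat 1) $ i $ j"
    and shift: "\<And>t. mat_exp (t *\<^sub>R G) = exp (- t * c) *\<^sub>R mat_exp (t *\<^sub>R (G + c *\<^sub>R mat 1))"
    using generator_shift_nonneg[OF assms(1)] by blast
  have "\<exists>m. 0 < mat_pow (G + c *\<^sub>R mat 1) m $ i $ j"
    by (rule irreducible_gen_mat_pow_pos[OF assms(2) nonneg]) (simp add: mat_def)
  then obtain m where "0 < mat_pow (G + c *\<^sub>R mat 1) m $ i $ j"
    by blast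
  then have "0 < mat_pow (G + c *\<^sub>R mat 1) m $ i $ j / fact m"
    by (simp add: divide_pos_pos)
  also have "\<dots> \<le> mat_exp (G + c *\<^sub>R mat 1) $ i $ j"
    by (rule mat_pow_le_mat_exp[OF nonneg])
  finally have "0 < exp (- 1 * c) * mat_exp (1 *\<^sub>R (G + c *\<^sub>R mat 1)) $ i $ j"
    by (simp only: scaleR_one mult_pos_pos exp_gt_zero)
  then show ?thesis
    using shift[of 1] by (simp only: scaleR_one vector_scaleR_component real_scaleR_def)
qed

lemma abs_sum_diff_weights_le:
  fixes a b x :: "'n::finite \<Rightarrow> real"
  assumes a: "\<And>l. 0 \<le> a l" and b: "\<And>l. 0 \<le> b l"
    and mass: "sum a UNIV = r" "sum b UNIV = r" and "0 < r"
    and osc: "\<And>l l'. \<bar>x l - x l'\<bar> \<le> e"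
  shows "\<bar>\<Sum>l\<in>UNIV. (a l - b l) * x l\<bar> \<le> r * e"
proof -
  have "r * (\<Sum>l\<in>UNIV. a l * x l) = (\<Sum>l\<in>UNIV. \<Sum>l'\<in>UNIV. a l * b l' * x l)"
    unfolding mass(2)[symmetric] sum_product by (subst sum.swap) (simp add: mult_ac)
  moreover have "r * (\<Sum>l'\<in>UNIV. b l' * x l') = (\<Sum>l\<in>UNIV. \<Sum>l'\<in>UNIV. a l * b l' * x l')"
    unfolding mass(1)[symmetric] sum_product by (simp add: mult_ac)
  ultimately have "r * (\<Sum>l\<in>UNIV. (a l - b l) * x l) = (\<Sum>l\<in>UNIV. \<Sum>l'\<in>UNIV. a l * b l' * (x l - x l'))"
    by (simp add: left_diff_distrib right_diff_distrib sum_subtractf)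
  also have "\<bar>\<dots>\<bar> \<le> (\<Sum>l\<in>UNIV. \<Sum>l'\<in>UNIV. a l * b l' * e)"
    by (intro order_trans[OF sum_abs] sum_mono order_trans[OF sum_abs])
      (simp add: abs_mult a b osc mult_left_mono)
  also have "\<dots> = r * (r * e)"
    using mass by (simp add: sum_distrib_right[symmetric] sum_distrib_left[symmetric] mult_ac)
  finally show ?thesis
    using \<open>0 < r\<close> by (simp add: abs_mult)
qed

lemma doeblin_column_contraction:
  fixes P M :: "real^'n^'n"
  assumes lower: "\<And>i j. \<delta> \<le> P $ i $ j" and row_sums: "P *v 1 = 1"
    and pos: "0 < 1 - real CARD('n) * \<delta>"
    and osc: "\<And>l l'. \<bar>M $ l $ j - M $ l' $ j\<bar> \<le> e"
  shows "\<bar>(P ** M) $ i $ j - (P ** M) $ k $ j\<bar> \<le> (1 - real CARD('n) * \<delta>) * e"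
proof -
  have mass: "(\<Sum>l\<in>UNIV. P $ i $ l - \<delta>) = 1 - real CARD('n) * \<delta>" for i
    using row_sums by (simp add: sum_subtractf vec_eq_iff matrix_vector_mult_def)
  have "(P ** M) $ i $ j - (P ** M) $ k $ j = (\<Sum>l\<in>UNIV. ((P $ i $ l - \<delta>) - (P $ k $ l - \<delta>)) * M $ l $ j)"
    by (simp add: matrix_matrix_mult_def sum_subtractf[symmetric] left_diff_distrib)
  also have "\<bar>\<dots>\<bar> \<le> (1 - real CARD('n) * \<delta>) * e"
    by (rule abs_sum_diff_weights_le[OF _ _ mass mass pos osc]) (simp_all add: lower)
  finally show ?thesis .
qed

lemma stationary_entry_deviation_le:
  fixes P :: "real^'n^'n"
  assumes "p v* P = p" and "(\<Sum>i\<in>UNIV. p $ i) = 1"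
    and osc: "\<And>l l'. \<bar>P $ l $ j - P $ l' $ j\<bar> \<le> e"
  shows "\<bar>P $ i $ j - p $ j\<bar> \<le> (\<Sum>k\<in>UNIV. \<bar>p $ k\<bar>) * e"
proof -
  have "P $ i $ j - p $ j = (\<Sum>k\<in>UNIV. p $ k * (P $ i $ j - P $ k $ j))"
    using assms(1,2) by (simp add: right_diff_distrib sum_subtractf vec_eq_iff vector_matrix_mult_def
        sum_distrib_right[symmetric])
  also have "\<bar>\<dots>\<bar> \<le> (\<Sum>k\<in>UNIV. \<bar>p $ k\<bar> * e)"
    by (intro order_trans[OF sum_abs] sum_mono) (simp add: abs_mult osc mult_left_mono)
  finally show ?thesis
    by (simp add: sum_distrib_right)
qed

lemma power_floor_le_exp:
  fixes \<rho> t :: real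
  assumes "0 < \<rho>" "\<rho> < 1" "0 \<le> t"
  shows "\<rho> ^ nat \<lfloor>t\<rfloor> \<le> exp (- ln \<rho>) * exp (ln \<rho> * t)"
proof -
  have "\<rho> ^ nat \<lfloor>t\<rfloor> = exp (real (nat \<lfloor>t\<rfloor>) * ln \<rho>)"
    using assms by (subst exp_of_nat_mult) simp
  also have "\<dots> \<le> exp ((t - 1) * ln \<rho>)"
    using assms by (intro exp_mono mult_right_mono_neg) (linarith, simp)
  also have "\<dots> = exp (- ln \<rho>) * exp (ln \<rho> * t)"
    by (simp add: exp_add[symmetric] algebra_simps)
  finally show ?thesis .
qed

lemma generator_mat_exp_row_sums:
  "G *v 1 = 0 \<Longrightarrow> mat_exp (t *\<^sub>R G) *v 1 = 1"
  by (rule mat_exp_mult_one_vector) (simp add: scaleR_matrix_vector_assoc[symmetric])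

lemma generator_mat_exp_le_one:
  assumes "\<And>i j. i \<noteq> j \<Longrightarrow> 0 \<le> G $ i $ j" and "G *v 1 = 0" and "0 \<le> t"
  shows "mat_exp (t *\<^sub>R G) $ i $ j \<le> 1"
proof -
  have "mat_exp (t *\<^sub>R G) $ i $ j \<le> (\<Sum>l\<in>UNIV. mat_exp (t *\<^sub>R G) $ i $ l)"
    by (rule member_le_sum) (simp_all add: generator_mat_exp_nonneg assms(1,3))
  also have "\<dots> = 1"
    using generator_mat_exp_row_sums[OF assms(2), of t] by (simp add: vec_eq_iff matrix_vector_mult_def)
  finally show ?thesis .
qed

lemma irreducible_generator_doeblin_constant:
  fixes G :: "real^'n^'n"
  assumes "\<And>i j. i \<noteq> j \<Longrightarrow> 0 \<le> G $ i $ j" and "G *v 1 = 0" and "irreducible_gen G"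
  obtains \<delta> where "0 < \<delta>" "real CARD('n) * \<delta> < 1" "\<And>i j. \<delta> \<le> mat_exp G $ i $ j"
proof
  define m where "m = Min (range (\<lambda>(i, j). mat_exp G $ i $ j))"
  define \<delta> where "\<delta> = m / 2"
  have "0 < m"
    using irreducible_generator_mat_exp_pos[OF assms(1,3)] by (auto simp: m_def)
  then show "0 < \<delta>"
    by (simp add: \<delta>_def)
  have m_le: "m \<le> mat_exp G $ i $ j" for i j
    unfolding m_def by (rule Min_le) (auto intro: range_eqI[of _ _ "(i, j)"])
  show "\<delta> \<le> mat_exp G $ i $ j" for i j
    using \<open>0 < m\<close> m_le[of i j] unfolding \<delta>_def by linarith
  have two_\<delta>: "2 * \<delta> \<le> mat_exp G $ i $ j" for i j
    by (simp add: \<delta>_def m_le)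
  have "(\<Sum>j\<in>(UNIV::'n set). 2 * \<delta>) \<le> (\<Sum>j\<in>UNIV. mat_exp G $ undefined $ j)"
    by (rule sum_mono) (rule two_\<delta>)
  also have "\<dots> = 1"
    using generator_mat_exp_row_sums[OF assms(2), of 1] by (simp add: vec_eq_iff matrix_vector_mult_def)
  finally show "real CARD('n) * \<delta> < 1"
    using \<open>0 < \<delta>\<close> by simp
qed

lemma generator_mat_exp_oscillation_le:
  fixes G :: "real^'n^'n"
  assumes off_diag: "\<And>i j. i \<noteq> j \<Longrightarrow> 0 \<le> G $ i $ j" and row_sums: "G *v 1 = 0"
    and lower: "\<And>i j. \<delta> \<le> mat_exp G $ i $ j" and pos: "0 < 1 - real CARD('n) * \<delta>"
    and "0 \<le> s"
  shows "\<bar>mat_exp ((real m + s) *\<^sub>R G) $ i $ j - mat_exp ((real m + s) *\<^sub>R G) $ k $ j\<bar>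
    \<le> (1 - real CARD('n) * \<delta>) ^ m"
  using \<open>0 \<le> s\<close>
proof (induction m arbitrary: i k)
  case 0
  show ?case
    using generator_mat_exp_nonneg[OF off_diag \<open>0 \<le> s\<close>, of i j] generator_mat_exp_nonneg[OF off_diag \<open>0 \<le> s\<close>, of k j]
      generator_mat_exp_le_one[OF off_diag row_sums \<open>0 \<le> s\<close>, of i j] generator_mat_exp_le_one[OF off_diag row_sums \<open>0 \<le> s\<close>, of k j]
    by (simp add: abs_le_iff)
next
  case (Suc m)
  have "mat_exp ((real (Suc m) + s) *\<^sub>R G) = mat_exp G ** mat_exp ((real m + s) *\<^sub>R G)"
    using mat_exp_add[of 1 "real m + s" G] by (simp add: add_ac)
  moreover have "\<bar>(mat_exp G ** mat_exp ((real m + s) *\<^sub>R G)) $ i $ j -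
      (mat_exp G ** mat_exp ((real m + s) *\<^sub>R G)) $ k $ j\<bar> \<le> (1 - real CARD('n) * \<delta>) * (1 - real CARD('n) * \<delta>) ^ m"
    using generator_mat_exp_row_sums[OF row_sums, of 1]
    by (intro doeblin_column_contraction lower pos Suc.IH Suc.prems) simp
  ultimately show ?case
    by simp
qed

lemma irreducible_generator_mat_exp_converges:
  fixes G :: "real^'n^'n" and p :: "real^'n"
  assumes off_diag: "\<And>i j. i \<noteq> j \<Longrightarrow> 0 \<le> G $ i $ j" and row_sums: "G *v 1 = 0"
    and irr: "irreducible_gen G" and stat: "p v* G = 0" and mass: "(\<Sum>i\<in>UNIV. p $ i) = 1"
  obtains C a where "\<And>t i j. 0 \<le> t \<Longrightarrow> \<bar>mat_exp (t *\<^sub>R G) $ i $ j - p $ j\<bar> \<le> C * exp (- a * t)"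
    and "0 < a"
proof -
  obtain \<delta> where \<delta>: "0 < \<delta>" "real CARD('n) * \<delta> < 1" "\<And>i j. \<delta> \<le> mat_exp G $ i $ j"
    using irreducible_generator_doeblin_constant[OF off_diag row_sums irr] by blast
  define \<rho> where "\<rho> = 1 - real CARD('n) * \<delta>"
  have \<rho>: "0 < \<rho>" "\<rho> < 1"
    using \<delta> by (simp_all add: \<rho>_def)
  define S where "S = (\<Sum>k\<in>UNIV. \<bar>p $ k\<bar>)"
  show ?thesis
  proof
    fix t :: real and i j
    assume "0 \<le> t"
    have "\<bar>mat_exp (t *\<^sub>R G) $ i $ j - p $ j\<bar> \<le> S * \<rho> ^ nat \<lfloor>t\<rfloor>"
      unfolding S_def
    proof (rule stationary_entry_deviation_le[OF _ mass])
      show "p v* mat_exp (t *\<^sub>R G) = p"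
        by (rule vector_mat_exp_stationary) (simp add: vector_scaleR_matrix_ac stat)
      show "\<bar>mat_exp (t *\<^sub>R G) $ l $ j - mat_exp (t *\<^sub>R G) $ l' $ j\<bar> \<le> \<rho> ^ nat \<lfloor>t\<rfloor>" for l l'
        using generator_mat_exp_oscillation_le[OF off_diag row_sums \<delta>(3),
            where s = "t - real (nat \<lfloor>t\<rfloor>)" and m = "nat \<lfloor>t\<rfloor>"] \<rho>(1) \<open>0 \<le> t\<close>
        by (simp add: \<rho>_def)
    qed
    also have "\<dots> \<le> S * (exp (- ln \<rho>) * exp (ln \<rho> * t))"
      by (intro mult_left_mono power_floor_le_exp) (use \<rho> \<open>0 \<le> t\<close> in \<open>simp_all add: S_def sum_nonneg\<close>)
    finally show "\<bar>mat_exp (t *\<^sub>R G) $ i $ j - p $ j\<bar> \<le> (S * exp (- ln \<rho>)) * exp (- (- ln \<rho>) * t)"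
      by (simp add: mult_ac)
  next
    show "0 < - ln \<rho>"
      using \<rho> by simp
  qed
qed

section \<open>The transition matrices of the counting process\<close>

lemma continuous_on_matrix_mult [continuous_intros]:
  "continuous_on S f \<Longrightarrow> continuous_on S g \<Longrightarrow>
    continuous_on S (\<lambda>x. (f x :: real^'n^'m) ** (g x :: real^'p^'n))"
  by (rule bounded_bilinear.continuous_on[OF matrix_matrix_mult_bounded_bilinear])

lemma map_P_Suc_conv_integral:
  assumes "(\<lambda>s. map_P L0 L1 k s ** L1 ** mat_exp ((- s) *\<^sub>R L0)) integrable_on {0..t}"
  shows "map_P L0 L1 (Suc k) t =
    integral {0..t} (\<lambda>s. map_P L0 L1 k s ** L1 ** mat_exp ((- s) *\<^sub>R L0)) ** mat_exp (t *\<^sub>R L0)"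
proof -
  have "map_P L0 L1 (Suc k) t =
      integral {0..t} (\<lambda>s. (map_P L0 L1 k s ** L1 ** mat_exp ((- s) *\<^sub>R L0)) ** mat_exp (t *\<^sub>R L0))"
    by (simp add: mat_exp_diff matrix_mul_assoc)
  also have "\<dots> = integral {0..t} (\<lambda>s. map_P L0 L1 k s ** L1 ** mat_exp ((- s) *\<^sub>R L0)) ** mat_exp (t *\<^sub>R L0)"
    by (rule integral_linear[OF assms bounded_bilinear.bounded_linear_left
          [OF matrix_matrix_mult_bounded_bilinear], unfolded o_def])
  finally show ?thesis .
qed

definition map_P_deriv :: "real^'n^'n \<Rightarrow> real^'n^'n \<Rightarrow> nat \<Rightarrow> real \<Rightarrow> real^'n^'n" where
  "map_P_deriv L0 L1 k t =
     map_P L0 L1 k t ** L0 + (if k = 0 then 0 else map_P L0 L1 (k - 1) t ** L1)"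

lemma map_P_has_vector_derivative:
  "t \<in> {0..T} \<Longrightarrow> (map_P L0 L1 k has_vector_derivative map_P_deriv L0 L1 k t) (at t within {0..T})"
proof (induction k arbitrary: t)
  case 0
  show ?case
    using mat_exp_has_vector_derivative[of L0 t] by (simp add: map_P_deriv_def)
next
  case (Suc k)
  define g where "g s = map_P L0 L1 k s ** L1 ** mat_exp ((- s) *\<^sub>R L0)" for s
  have "continuous_on {0..T} (map_P L0 L1 k)"
    using Suc.IH by (rule continuous_on_vector_derivative)
  moreover have "continuous_on {0..T} (\<lambda>s. mat_exp ((- s) *\<^sub>R L0))"
    using continuous_on_mat_exp[of _ "- L0"] by simp
  ultimately have cont_g: "continuous_on {0..T} g"
    unfolding g_def by (intro continuous_intros)
  have P_Suc: "map_P L0 L1 (Suc k) u = integral {0..u} g ** mat_exp (u *\<^sub>R L0)" if "u \<in> {0..T}" for u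
    unfolding g_def
    by (rule map_P_Suc_conv_integral, rule integrable_continuous_interval,
        rule continuous_on_subset[OF cont_g[unfolded g_def]]) (use that in auto)
  have "((\<lambda>u. integral {0..u} g ** mat_exp (u *\<^sub>R L0)) has_vector_derivative
      integral {0..t} g ** (mat_exp (t *\<^sub>R L0) ** L0) + g t ** mat_exp (t *\<^sub>R L0)) (at t within {0..T})"
    by (rule bounded_bilinear.has_vector_derivative[OF matrix_matrix_mult_bounded_bilinear
          integral_has_vector_derivative[OF cont_g Suc.prems] mat_exp_has_vector_derivative])
  moreover have "integral {0..t} g ** (mat_exp (t *\<^sub>R L0) ** L0) + g t ** mat_exp (t *\<^sub>R L0) =
      map_P_deriv L0 L1 (Suc k) t"
    using P_Suc[OF Suc.prems]
    by (simp add: map_P_deriv_def g_def matrix_mul_assoc[symmetric] mat_exp_uminus_mult)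
  ultimately show ?case
    using has_vector_derivative_transform[OF Suc.prems P_Suc] by simp
qed

lemma continuous_on_map_P: "continuous_on {0..T} (map_P L0 L1 k)"
  by (rule continuous_on_vector_derivative) (rule map_P_has_vector_derivative)

lemma has_integral_power_div_fact:
  fixes t :: real
  assumes "0 \<le> t"
  shows "((\<lambda>s. s ^ k / fact k) has_integral t ^ Suc k / fact (Suc k)) {0..t}"
proof -
  have "((\<lambda>s. s ^ k / fact k) has_integral t ^ Suc k / fact (Suc k) - 0 ^ Suc k / fact (Suc k)) {0..t}"
  proof (rule fundamental_theorem_of_calculus[OF assms])
    show "((\<lambda>s. s ^ Suc k / fact (Suc k)) has_vector_derivative x ^ k / fact k) (at x within {0..t})"
      for x :: real
    proof -
      have "((\<lambda>s. s ^ Suc k) has_real_derivative real (Suc k) * x ^ k) (at x within {0..t})"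
        using DERIV_pow[of "Suc k" x] by (simp add: has_field_derivative_at_within)
      then have "((\<lambda>s. s ^ Suc k / fact (Suc k)) has_real_derivative real (Suc k) * x ^ k / fact (Suc k))
          (at x within {0..t})"
        by (rule DERIV_cdivide)
      moreover have "real (Suc k) * x ^ k / fact (Suc k) = x ^ k / fact k"
        by (simp add: fact_Suc del: of_nat_Suc)
      ultimately show ?thesis
        by (simp add: has_real_derivative_iff_has_vector_derivative)
    qed
  qed
  then show ?thesis
    by simp
qed

lemma norm_integral_le_power_div_fact:
  fixes f :: "real \<Rightarrow> 'a::euclidean_space"
  assumes "0 \<le> t" and "f integrable_on {0..t}"
    and "\<And>s. s \<in> {0..t} \<Longrightarrow> norm (f s) \<le> c * (s ^ k / fact k)"
  shows "norm (integral {0..t} f) \<le> c * (t ^ Suc k / fact (Suc k))"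
proof -
  have int: "((\<lambda>s. c * (s ^ k / fact k)) has_integral c * (t ^ Suc k / fact (Suc k))) {0..t}"
    using assms(1) by (intro has_integral_mult_right has_integral_power_div_fact)
  show ?thesis
    using integral_norm_bound_integral[OF assms(2) has_integral_integrable[OF int] assms(3)]
      integral_unique[OF int] by simp
qed

lemma norm_map_P_le:
  fixes L0 L1 :: "real^'n^'n"
  assumes "0 \<le> T"
  obtains B \<beta> where "0 \<le> B" "0 \<le> \<beta>"
    and "\<And>k t. t \<in> {0..T} \<Longrightarrow> norm (map_P L0 L1 k t) \<le> B * \<beta> ^ k * (t ^ k / fact k)"
proof -
  obtain K where K: "0 < K" "\<And>a b. norm ((a::real^'n^'n) ** (b::real^'n^'n)) \<le> norm a * norm b * K"
    using bounded_bilinear.pos_bounded[OF matrix_matrix_mult_bounded_bilinear] by blast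
  have "compact ((\<lambda>u. mat_exp (u *\<^sub>R L0)) ` {0..T})"
    by (intro compact_continuous_image continuous_on_mat_exp compact_Icc)
  then obtain B where B: "0 < B" "\<And>u. u \<in> {0..T} \<Longrightarrow> norm (mat_exp (u *\<^sub>R L0)) \<le> B"
    by (auto dest!: compact_imp_bounded simp: bounded_pos)
  define \<beta> where "\<beta> = norm L1 * K * K * B"
  have bound: "norm (map_P L0 L1 k t) \<le> B * \<beta> ^ k * (t ^ k / fact k)" if "t \<in> {0..T}" for k t
    using that
  proof (induction k arbitrary: t)
    case 0
    then show ?case
      using B by simp
  next
    case (Suc k)
    let ?g = "\<lambda>s. map_P L0 L1 k s ** L1 ** mat_exp ((t - s) *\<^sub>R L0)"
    have "continuous_on {0..t} ?g"
      using Suc.prems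
      by (intro continuous_intros continuous_on_subset[OF continuous_on_map_P] continuous_on_compose2[OF
            continuous_on_mat_exp[of _ L0], of _ "\<lambda>s. t - s"]) auto
    then have "?g integrable_on {0..t}"
      by (rule integrable_continuous_interval)
    moreover have "norm (?g s) \<le> \<beta> * (B * \<beta> ^ k) * (s ^ k / fact k)" if "s \<in> {0..t}" for s
    proof -
      have "norm (?g s) \<le> norm (map_P L0 L1 k s ** L1) * norm (mat_exp ((t - s) *\<^sub>R L0)) * K"
        by (rule K(2))
      also have "\<dots> \<le> (norm (map_P L0 L1 k s) * norm L1 * K) * B * K"
        using K B(2)[of "t - s"] that Suc.prems by (intro mult_right_mono mult_mono) auto
      also have "\<dots> \<le> (B * \<beta> ^ k * (s ^ k / fact k)) * norm L1 * K * B * K"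
        using Suc.IH[of s] that Suc.prems K(1) B(1) by (intro mult_right_mono) auto
      also have "\<dots> = \<beta> * (B * \<beta> ^ k) * (s ^ k / fact k)"
        by (simp add: \<beta>_def)
      finally show ?thesis .
    qed
    ultimately have "norm (integral {0..t} ?g) \<le> \<beta> * (B * \<beta> ^ k) * (t ^ Suc k / fact (Suc k))"
      using Suc.prems by (intro norm_integral_le_power_div_fact) auto
    then show ?case
      by (simp add: mult_ac)
  qed
  show ?thesis
    by (rule that[OF _ _ bound]) (use B K in \<open>simp_all add: \<beta>_def\<close>)
qed

lemma has_vector_derivative_series:
  fixes f f' :: "nat \<Rightarrow> real \<Rightarrow> 'a::banach"
  assumes deriv: "\<And>n t. t \<in> {a..b} \<Longrightarrow> (f n has_vector_derivative f' n t) (at t within {a..b})"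
    and bound: "\<And>n t. t \<in> {a..b} \<Longrightarrow> norm (f' n t) \<le> M n" and "summable M"
    and "summable (\<lambda>n. f n a)" and t: "t \<in> {a..b}"
  shows "summable (\<lambda>n. f n t)"
    and "((\<lambda>t. \<Sum>n. f n t) has_vector_derivative (\<Sum>n. f' n t)) (at t within {a..b})"
proof -
  have limit: "uniform_limit {a..b} (\<lambda>n t. \<Sum>i<n. f' i t) (\<lambda>t. \<Sum>i. f' i t) sequentially"
    by (rule Weierstrass_m_test[OF bound \<open>summable M\<close>])
  have uniform: "\<forall>\<^sub>F n in sequentially. \<forall>t\<in>{a..b}. \<forall>h.
      norm ((\<Sum>i<n. h *\<^sub>R f' i t) - h *\<^sub>R (\<Sum>i. f' i t)) \<le> e * norm h" if "0 < e" for e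
    using uniform_limitD[OF limit that]
  proof eventually_elim
    case (elim n)
    show ?case
    proof (intro ballI allI)
      fix t h
      assume "t \<in> {a..b}"
      have "norm ((\<Sum>i<n. h *\<^sub>R f' i t) - h *\<^sub>R (\<Sum>i. f' i t)) =
          \<bar>h\<bar> * dist (\<Sum>i<n. f' i t) (\<Sum>i. f' i t)"
        by (simp add: dist_norm scaleR_sum_right[symmetric] scaleR_diff_right[symmetric])
      also have "\<dots> \<le> \<bar>h\<bar> * e"
        using elim \<open>t \<in> {a..b}\<close> by (intro mult_left_mono) (auto intro: less_imp_le)
      also have "\<dots> = e * norm h"
        by simp
      finally show "norm ((\<Sum>i<n. h *\<^sub>R f' i t) - h *\<^sub>R (\<Sum>i. f' i t)) \<le> e * norm h" .
    qed
  qed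
  have "a \<in> {a..b}"
    using t by simp
  have "\<exists>g. \<forall>t\<in>{a..b}. (\<lambda>n. f n t) sums g t \<and>
      (g has_derivative (\<lambda>h. h *\<^sub>R (\<Sum>i. f' i t))) (at t within {a..b})"
    by (rule has_derivative_series[where S = "{a..b}" and f = f and f' = "\<lambda>n t h. h *\<^sub>R f' n t"
          and g' = "\<lambda>t h. h *\<^sub>R (\<Sum>i. f' i t)", OF _ _ uniform \<open>a \<in> {a..b}\<close>
          summable_sums[OF \<open>summable (\<lambda>n. f n a)\<close>]])
      (use deriv in \<open>simp_all add: convex_real_interval has_vector_derivative_def\<close>)
  then obtain g where g: "\<And>t. t \<in> {a..b} \<Longrightarrow> (\<lambda>n. f n t) sums g t \<and>
      (g has_derivative (\<lambda>h. h *\<^sub>R (\<Sum>i. f' i t))) (at t within {a..b})"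
    by blast
  show "summable (\<lambda>n. f n t)"
    using g[OF t] by (auto simp: summable_def)
  have g_deriv: "(g has_vector_derivative (\<Sum>n. f' n t)) (at t within {a..b})"
    using g[OF t] by (simp add: has_vector_derivative_def)
  show "((\<lambda>t. \<Sum>n. f n t) has_vector_derivative (\<Sum>n. f' n t)) (at t within {a..b})"
    by (rule has_vector_derivative_transform[OF t _ g_deriv]) (use g in \<open>simp add: sums_iff\<close>)
qed

lemma mat_exp_has_vector_derivative_left:
  "((\<lambda>t. mat_exp (t *\<^sub>R A)) has_vector_derivative A ** mat_exp (t *\<^sub>R A)) (at t within S)"
  using mat_exp_has_vector_derivative[of A t S] by (simp add: mat_exp_scaleR_commute)

lemma map_P_zero: "map_P L0 L1 k 0 = (if k = 0 then mat 1 else 0)"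
  by (cases k) simp_all

lemma summable_two_pow_exp_series:
  fixes c x :: real
  shows "summable (\<lambda>k. 2 ^ k * (c * x ^ k / fact k))"
    and "summable (\<lambda>k. 2 ^ k * (c * x ^ (k - 1) / fact (k - 1)))"
proof -
  show *: "summable (\<lambda>k. 2 ^ k * (c * x ^ k / fact k))"
    using summable_mult[OF summable_exp[of "2 * x"], of c] by (simp add: power_mult_distrib field_simps)
  then show "summable (\<lambda>k. 2 ^ k * (c * x ^ (k - 1) / fact (k - 1)))"
    using summable_Suc_iff[of "\<lambda>k. 2 ^ k * (c * x ^ (k - 1) / fact (k - 1))"] summable_mult[OF *, of 2]
    by (simp add: mult.assoc)
qed

lemma norm_map_P_deriv_weighted_le:
  fixes L0 L1 :: "real^'n^'n" and w :: "nat \<Rightarrow> real"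
  assumes w: "\<And>k. \<bar>w k\<bar> \<le> 2 ^ k" and "0 \<le> T"
  obtains M where "summable M"
    and "\<And>k t. t \<in> {0..T} \<Longrightarrow> norm (w k *\<^sub>R map_P_deriv L0 L1 k t) \<le> M k"
proof -
  obtain B \<beta> where B: "0 \<le> B" "0 \<le> \<beta>"
    and P_bound: "\<And>k t. t \<in> {0..T} \<Longrightarrow> norm (map_P L0 L1 k t) \<le> B * \<beta> ^ k * (t ^ k / fact k)"
    using norm_map_P_le[OF \<open>0 \<le> T\<close>] by blast
  obtain K where K: "0 < K" "\<And>a b. norm ((a::real^'n^'n) ** (b::real^'n^'n)) \<le> norm a * norm b * K"
    using bounded_bilinear.pos_bounded[OF matrix_matrix_mult_bounded_bilinear] by blast
  define m where "m k = B * (\<beta> * T) ^ k / fact k" for k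
  have P_le_m: "norm (map_P L0 L1 k t) \<le> m k" if "t \<in> {0..T}" for k t
  proof -
    have "B * \<beta> ^ k * (t ^ k / fact k) \<le> B * \<beta> ^ k * (T ^ k / fact k)"
      using that B by (intro mult_left_mono divide_right_mono power_mono) auto
    then show ?thesis
      using P_bound[OF that, of k] by (simp add: m_def power_mult_distrib)
  qed
  have mult_le: "norm (X ** Y) \<le> c * norm Y * K" if "norm X \<le> c" for X Y :: "real^'n^'n" and c
    using K that by (meson mult_right_mono norm_ge_zero order_trans less_imp_le)
  show ?thesis
  proof
    have "summable (\<lambda>k. 2 ^ k * m k)" "summable (\<lambda>k. 2 ^ k * m (k - 1))"
      using summable_two_pow_exp_series[of B "\<beta> * T"] by (simp_all add: m_def)
    from summable_add[OF summable_mult2[OF this(1), of "norm L0 * K"] summable_mult2[OF this(2), of "norm L1 * K"]]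
    show "summable (\<lambda>k. 2 ^ k * (m k * norm L0 * K + m (k - 1) * norm L1 * K))"
      by (simp add: algebra_simps)
    fix k t
    assume "t \<in> {0..T}"
    have "norm (map_P L0 L1 k t ** L0) \<le> m k * norm L0 * K"
      by (rule mult_le[OF P_le_m[OF \<open>t \<in> {0..T}\<close>]])
    moreover have "norm (if k = 0 then 0 else map_P L0 L1 (k - 1) t ** L1) \<le> m (k - 1) * norm L1 * K"
      using mult_le[OF P_le_m[OF \<open>t \<in> {0..T}\<close>], of "k - 1" L1] B K(1) \<open>0 \<le> T\<close> by (auto simp: m_def)
    ultimately have "norm (map_P_deriv L0 L1 k t) \<le> m k * norm L0 * K + m (k - 1) * norm L1 * K"
      unfolding map_P_deriv_def by (meson add_mono norm_triangle_le)
    then show "norm (w k *\<^sub>R map_P_deriv L0 L1 k t) \<le> 2 ^ k * (m k * norm L0 * K + m (k - 1) * norm L1 * K)"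
      using w[of k] by (simp add: mult_mono)
  qed
qed

text \<open>Weights of growth at most \<open>2 ^ k\<close> cover both the total mass (\<open>w k = 1\<close>) and the
  first moment (\<open>w k = k\<close>) of the counting variable.\<close>

lemma map_P_weighted_series:
  fixes L0 L1 :: "real^'n^'n" and w :: "nat \<Rightarrow> real"
  assumes w: "\<And>k. \<bar>w k\<bar> \<le> 2 ^ k" and t: "t \<in> {0..T}"
  shows "summable (\<lambda>k. w k *\<^sub>R map_P L0 L1 k t)"
    and "((\<lambda>t. \<Sum>k. w k *\<^sub>R map_P L0 L1 k t) has_vector_derivative
          (\<Sum>k. w k *\<^sub>R map_P_deriv L0 L1 k t)) (at t within {0..T})"
proof -
  obtain M where "summable M"
    and deriv_le_M: "\<And>k t. t \<in> {0..T} \<Longrightarrow> norm (w k *\<^sub>R map_P_deriv L0 L1 k t) \<le> M k"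
    using norm_map_P_deriv_weighted_le[OF w, of T L0 L1] t by auto
  have "(\<lambda>k. w k *\<^sub>R map_P L0 L1 k 0) = (\<lambda>k. if k = 0 then w k *\<^sub>R mat 1 else 0)"
    by (simp add: fun_eq_iff map_P_zero)
  then have summable_0: "summable (\<lambda>k. w k *\<^sub>R map_P L0 L1 k 0)"
    using sums_summable[OF sums_single[of 0 "\<lambda>k. w k *\<^sub>R mat 1"]] by simp
  have deriv: "((\<lambda>t. w k *\<^sub>R map_P L0 L1 k t) has_vector_derivative w k *\<^sub>R map_P_deriv L0 L1 k t)
      (at t within {0..T})" if "t \<in> {0..T}" for k t
    by (rule bounded_linear.has_vector_derivative[OF bounded_linear_scaleR_right
          map_P_has_vector_derivative[OF that]])
  show "summable (\<lambda>k. w k *\<^sub>R map_P L0 L1 k t)"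
    by (rule has_vector_derivative_series(1)[OF deriv deriv_le_M \<open>summable M\<close> summable_0 t])
  show "((\<lambda>t. \<Sum>k. w k *\<^sub>R map_P L0 L1 k t) has_vector_derivative
      (\<Sum>k. w k *\<^sub>R map_P_deriv L0 L1 k t)) (at t within {0..T})"
    using has_vector_derivative_series(2)[OF deriv deriv_le_M \<open>summable M\<close> summable_0 t] by simp
qed

section \<open>The zeroth and first moments\<close>

definition map_P_sum :: "real^'n^'n \<Rightarrow> real^'n^'n \<Rightarrow> real \<Rightarrow> real^'n^'n" where
  "map_P_sum L0 L1 t = (\<Sum>k. map_P L0 L1 k t)"

definition map_P_moment :: "real^'n^'n \<Rightarrow> real^'n^'n \<Rightarrow> real \<Rightarrow> real^'n^'n" where
  "map_P_moment L0 L1 t = (\<Sum>k. real k *\<^sub>R map_P L0 L1 k t)"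

lemma summable_map_P: "0 \<le> t \<Longrightarrow> summable (\<lambda>k. map_P L0 L1 k t)"
  using map_P_weighted_series(1)[of "\<lambda>_. 1" t t] by simp

lemma summable_map_P_moment: "0 \<le> t \<Longrightarrow> summable (\<lambda>k. real k *\<^sub>R map_P L0 L1 k t)"
  using map_P_weighted_series(1)[of real t t] by (simp add: less_imp_le)

lemma map_P_deriv_sums:
  assumes "summable (\<lambda>k. w k *\<^sub>R map_P L0 L1 k t)" "summable (\<lambda>k. w (Suc k) *\<^sub>R map_P L0 L1 k t)"
  shows "(\<lambda>k. w k *\<^sub>R map_P_deriv L0 L1 k t) sums
    ((\<Sum>k. w k *\<^sub>R map_P L0 L1 k t) ** L0 + (\<Sum>k. w (Suc k) *\<^sub>R map_P L0 L1 k t) ** L1)"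
proof -
  note right_mult = bounded_bilinear.bounded_linear_left[OF matrix_matrix_mult_bounded_bilinear]
  have "(\<lambda>k. (w k *\<^sub>R map_P L0 L1 k t) ** L0) sums ((\<Sum>k. w k *\<^sub>R map_P L0 L1 k t) ** L0)"
    by (rule bounded_linear.sums[OF right_mult summable_sums[OF assms(1)]])
  moreover have "(\<lambda>k. (w (Suc k) *\<^sub>R map_P L0 L1 k t) ** L1) sums
      ((\<Sum>k. w (Suc k) *\<^sub>R map_P L0 L1 k t) ** L1)"
    by (rule bounded_linear.sums[OF right_mult summable_sums[OF assms(2)]])
  then have "(\<lambda>k. w k *\<^sub>R (if k = 0 then 0 else map_P L0 L1 (k - 1) t ** L1)) sums
      ((\<Sum>k. w (Suc k) *\<^sub>R map_P L0 L1 k t) ** L1)"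
    using sums_Suc[of "\<lambda>k. w k *\<^sub>R (if k = 0 then 0 else map_P L0 L1 (k - 1) t ** L1)"]
    by (simp add: scalar_matrix_assoc)
  ultimately show ?thesis
    unfolding map_P_deriv_def scaleR_add_right scalar_matrix_assoc[symmetric] by (rule sums_add)
qed

lemma map_P_sum_has_vector_derivative:
  assumes "t \<in> {0..T}"
  shows "(map_P_sum L0 L1 has_vector_derivative map_P_sum L0 L1 t ** (L0 + L1)) (at t within {0..T})"
proof -
  have "summable (\<lambda>k. map_P L0 L1 k t)"
    using assms by (simp add: summable_map_P)
  then have "(\<lambda>k. map_P_deriv L0 L1 k t) sums (map_P_sum L0 L1 t ** (L0 + L1))"
    using map_P_deriv_sums[of "\<lambda>_. 1" L0 L1 t] by (simp add: map_P_sum_def matrix_add_ldistrib)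
  then show ?thesis
    using map_P_weighted_series(2)[of "\<lambda>_. 1" t T L0 L1] assms
    by (simp add: sums_iff map_P_sum_def[abs_def])
qed

lemma map_P_moment_has_vector_derivative:
  assumes "t \<in> {0..T}"
  shows "(map_P_moment L0 L1 has_vector_derivative
    map_P_moment L0 L1 t ** (L0 + L1) + map_P_sum L0 L1 t ** L1) (at t within {0..T})"
proof -
  have "0 \<le> t"
    using assms by simp
  have "(\<lambda>k. real k *\<^sub>R map_P L0 L1 k t + map_P L0 L1 k t) sums
      (map_P_moment L0 L1 t + map_P_sum L0 L1 t)"
    unfolding map_P_moment_def map_P_sum_def
    by (intro sums_add summable_sums summable_map_P_moment summable_map_P \<open>0 \<le> t\<close>)
  moreover have "real (Suc k) *\<^sub>R map_P L0 L1 k t = real k *\<^sub>R map_P L0 L1 k t + map_P L0 L1 k t" for k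
    by (simp add: scaleR_add_left add.commute)
  ultimately have Suc_sums: "(\<lambda>k. real (Suc k) *\<^sub>R map_P L0 L1 k t) sums
      (map_P_moment L0 L1 t + map_P_sum L0 L1 t)"
    by simp
  have "(\<lambda>k. real k *\<^sub>R map_P_deriv L0 L1 k t) sums
      (map_P_moment L0 L1 t ** L0 + (map_P_moment L0 L1 t + map_P_sum L0 L1 t) ** L1)"
    using map_P_deriv_sums[OF summable_map_P_moment[OF \<open>0 \<le> t\<close>] sums_summable[OF Suc_sums]]
      sums_unique[OF Suc_sums]
    by (simp add: map_P_moment_def)
  moreover have "map_P_moment L0 L1 t ** L0 + (map_P_moment L0 L1 t + map_P_sum L0 L1 t) ** L1 =
      map_P_moment L0 L1 t ** (L0 + L1) + map_P_sum L0 L1 t ** L1"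
    by (simp add: matrix_add_ldistrib matrix_add_rdistrib add.assoc)
  ultimately show ?thesis
    using map_P_weighted_series(2)[of real t T L0 L1] assms
    by (simp add: sums_iff map_P_moment_def[abs_def] less_imp_le)
qed

lemma vector_matrix_ode_zero:
  fixes x :: "real \<Rightarrow> real^'n" and G :: "real^'n^'n"
  assumes "0 \<le> T"
    and deriv: "\<And>t. t \<in> {0..T} \<Longrightarrow> (x has_vector_derivative x t v* G) (at t within {0..T})"
    and "x 0 = 0"
  shows "x T = 0"
proof -
  define y where "y t = x t v* mat_exp (- (t *\<^sub>R G))" for t
  have "(y has_vector_derivative 0) (at t within {0..T})" if "t \<in> {0..T}" for t
  proof -
    have "(y has_vector_derivative
        x t v* (- G ** mat_exp (- (t *\<^sub>R G))) + (x t v* G) v* mat_exp (- (t *\<^sub>R G))) (at t within {0..T})"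
      unfolding y_def
      using bounded_bilinear.has_vector_derivative[OF vector_matrix_mult_bounded_bilinear deriv[OF that]
          mat_exp_has_vector_derivative_left[of "- G"]]
      by simp
    then show ?thesis
      by (simp add: vector_matrix_mul_assoc[symmetric] vector_matrix_left_distrib[symmetric]
          vector_matrix_mult_add_rdistrib
          bounded_bilinear.minus_right[OF vector_matrix_mult_bounded_bilinear])
  qed
  then have "((\<lambda>t. 0) has_integral (y T - y 0)) {0..T}"
    by (intro fundamental_theorem_of_calculus \<open>0 \<le> T\<close>)
  then have "y T = 0"
    using \<open>x 0 = 0\<close> has_integral_unique[OF _ has_integral_0] by (simp add: y_def)
  then have "y T v* mat_exp (T *\<^sub>R G) = 0"
    by simp
  then show ?thesis
    by (simp add: y_def vector_matrix_mul_assoc mat_exp_uminus_mult)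
qed

lemma map_P_sum_zero: "map_P_sum L0 L1 0 = mat 1"
  using sums_single[of 0 "\<lambda>_. mat 1 :: real^'n^'n"] by (simp add: map_P_sum_def map_P_zero sums_iff)

lemma map_P_moment_zero: "map_P_moment L0 L1 0 = 0"
proof -
  have zero: "(\<lambda>k. real k *\<^sub>R (if k = 0 then mat 1 else 0)) = (\<lambda>_. 0 :: real^'n^'n)"
    by (simp add: fun_eq_iff)
  show ?thesis
    unfolding map_P_moment_def map_P_zero zero by simp
qed

lemma stationary_map_P_sum:
  fixes L0 L1 :: "real^'n^'n"
  assumes stat: "p v* (L0 + L1) = 0" and "0 \<le> T"
  shows "p v* map_P_sum L0 L1 T = p"
proof -
  define x where "x t = p v* map_P_sum L0 L1 t - p" for t
  have "x T = 0"
  proof (rule vector_matrix_ode_zero[OF \<open>0 \<le> T\<close>])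
    fix t
    assume "t \<in> {0..T}"
    have "(x has_vector_derivative p v* (map_P_sum L0 L1 t ** (L0 + L1)) - 0) (at t within {0..T})"
      unfolding x_def
      by (intro has_vector_derivative_diff has_vector_derivative_const bounded_linear.has_vector_derivative[OF
            bounded_bilinear.bounded_linear_right[OF vector_matrix_mult_bounded_bilinear]]
            map_P_sum_has_vector_derivative \<open>t \<in> {0..T}\<close>)
    moreover have "p v* (map_P_sum L0 L1 t ** (L0 + L1)) = x t v* (L0 + L1)"
      by (simp add: x_def vector_matrix_mul_assoc[symmetric] vector_matrix_mult_diff_distrib stat)
    ultimately show "(x has_vector_derivative x t v* (L0 + L1)) (at t within {0..T})"
      by simp
  qed (simp add: x_def map_P_sum_zero)
  then show ?thesis
    by (simp add: x_def)
qed

lemma integral_mat_exp_mult: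
  assumes "0 \<le> t"
  shows "integral {0..t} (\<lambda>v. mat_exp (v *\<^sub>R G)) ** G = mat_exp (t *\<^sub>R G) - mat 1"
proof -
  have "((\<lambda>v. mat_exp (v *\<^sub>R G) ** G) has_integral mat_exp (t *\<^sub>R G) - mat_exp (0 *\<^sub>R G)) {0..t}"
    by (rule fundamental_theorem_of_calculus[OF assms mat_exp_has_vector_derivative])
  moreover have "integral {0..t} (\<lambda>v. mat_exp (v *\<^sub>R G) ** G) = integral {0..t} (\<lambda>v. mat_exp (v *\<^sub>R G)) ** G"
    by (rule integral_linear[OF integrable_continuous_interval[OF continuous_on_mat_exp]
          bounded_bilinear.bounded_linear_left[OF matrix_matrix_mult_bounded_bilinear], unfolded o_def])
  ultimately show ?thesis
    by (simp add: integral_unique)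
qed

lemma stationary_map_P_moment:
  fixes L0 L1 :: "real^'n^'n"
  assumes stat: "p v* (L0 + L1) = 0" and "0 \<le> T"
  shows "p v* map_P_moment L0 L1 T = (p v* L1) v* integral {0..T} (\<lambda>v. mat_exp (v *\<^sub>R (L0 + L1)))"
proof -
  define I where "I u = integral {0..u} (\<lambda>v. mat_exp (v *\<^sub>R (L0 + L1)))" for u
  define x where "x t = p v* map_P_moment L0 L1 t - (p v* L1) v* I t" for t
  note left_mult = bounded_bilinear.bounded_linear_right[OF vector_matrix_mult_bounded_bilinear]
  have "x T = 0"
  proof (rule vector_matrix_ode_zero[OF \<open>0 \<le> T\<close>])
    fix t
    assume t: "t \<in> {0..T}"
    have "(x has_vector_derivative
        p v* (map_P_moment L0 L1 t ** (L0 + L1) + map_P_sum L0 L1 t ** L1) -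
        (p v* L1) v* mat_exp (t *\<^sub>R (L0 + L1))) (at t within {0..T})"
      unfolding x_def I_def
      by (intro has_vector_derivative_diff bounded_linear.has_vector_derivative[OF left_mult]
          map_P_moment_has_vector_derivative integral_has_vector_derivative continuous_on_mat_exp t)
    moreover have "p v* map_P_sum L0 L1 t = p"
      using stationary_map_P_sum[OF stat] t by simp
    moreover have "mat_exp (t *\<^sub>R (L0 + L1)) = I t ** (L0 + L1) + mat 1"
      using integral_mat_exp_mult[of t "L0 + L1"] t by (simp add: I_def)
    ultimately show "(x has_vector_derivative x t v* (L0 + L1)) (at t within {0..T})"
      by (simp add: x_def vector_matrix_mul_assoc[symmetric] algebra_simps)
  qed (simp add: x_def map_P_moment_zero I_def)
  then show ?thesis
    by (simp add: x_def I_def)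
qed

section \<open>The truncated Drazin integral\<close>

lemma integral_tendsto_at_top_dominated:
  fixes f :: "real \<Rightarrow> 'a::euclidean_space"
  assumes int: "\<And>t. f integrable_on {a..t}" and h: "h integrable_on {a..}"
    and dom: "\<And>t. a \<le> t \<Longrightarrow> norm (f t) \<le> h t"
  shows "((\<lambda>t. integral {a..t} f) \<longlongrightarrow> integral {a..} f) at_top"
proof (rule tendsto_at_topI_sequentially)
  fix X :: "nat \<Rightarrow> real"
  assume X: "filterlim X at_top sequentially"
  define g where "g k t = (if t \<in> {..X k} then f t else 0)" for k t
  have restrict: "{..X k} \<inter> {a..} = {a..X k}" for k
    by auto
  have "g k integrable_on {a..}" for k
    unfolding g_def integrable_restrict_Int restrict by (rule int)
  moreover have "norm (g k t) \<le> h t" if "t \<in> {a..}" for k t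
    using dom[of t] that by (auto simp: g_def intro: order_trans[OF norm_ge_zero])
  moreover have "(\<lambda>k. g k t) \<longlonglongrightarrow> f t" for t
  proof (rule tendsto_eventually)
    have "\<forall>\<^sub>F k in sequentially. t \<le> X k"
      using X by (simp add: filterlim_at_top)
    then show "\<forall>\<^sub>F k in sequentially. g k t = f t"
      by (rule eventually_mono) (simp add: g_def)
  qed
  ultimately have "(\<lambda>k. integral {a..} (g k)) \<longlonglongrightarrow> integral {a..} f"
    by (intro dominated_convergence(2)[OF _ h]) auto
  moreover have "integral {a..} (g k) = integral {a..X k} f" for k
    unfolding g_def integral_restrict_Int restrict ..
  ultimately show "(\<lambda>k. integral {a..X k} f) \<longlonglongrightarrow> integral {a..} f"
    by simp
qed

definition drazin_trunc :: "real^'n^'n \<Rightarrow> real^'n \<Rightarrow> real \<Rightarrow> real^'n^'n" where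
  "drazin_trunc L p t = integral {0..t} (\<lambda>v. mat_exp (v *\<^sub>R L) - (\<chi> i j. p $ j))"

lemma drazin_trunc_tendsto:
  fixes G :: "real^'n^'n"
  assumes a: "0 < a"
    and bound: "\<And>t i j. 0 \<le> t \<Longrightarrow> \<bar>mat_exp (t *\<^sub>R G) $ i $ j - p $ j\<bar> \<le> C * exp (- a * t)"
  shows "(drazin_trunc G p \<longlongrightarrow> drazin G p) at_top"
  unfolding drazin_trunc_def[abs_def] drazin_def
proof (rule integral_tendsto_at_top_dominated)
  show "(\<lambda>v. mat_exp (v *\<^sub>R G) - (\<chi> i j. p $ j)) integrable_on {0..t}" for t
    by (intro integrable_continuous_interval continuous_intros continuous_on_mat_exp)
  show "(\<lambda>v. real CARD('n) * real CARD('n) * C * exp (- a * v)) integrable_on {0..}"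
    using integrable_on_cmult_left[OF integrable_on_exp_minus_to_infinity[OF a, of 0]] by simp
  show "norm (mat_exp (t *\<^sub>R G) - (\<chi> i j. p $ j)) \<le> real CARD('n) * real CARD('n) * C * exp (- a * t)"
    if "0 \<le> t" for t
    using norm_matrix_le_entry_bound[of "mat_exp (t *\<^sub>R G) - (\<chi> i j. p $ j)"] bound[OF that]
    by (simp add: mult.assoc)
qed

lemma drazin_trunc_mult_one_vector:
  fixes G :: "real^'n^'n"
  assumes "0 \<le> t" and "G *v 1 = 0" and "(\<Sum>i\<in>UNIV. p $ i) = 1"
  shows "drazin_trunc G p t *v 1 = 0"
proof -
  have "mat_exp (v *\<^sub>R G) *v 1 = 1" for v
    by (rule mat_exp_mult_one_vector) (simp add: scaleR_matrix_vector_assoc[symmetric] assms(2))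
  moreover have "(\<chi> i j. p $ j) *v (1::real^'n) = 1"
    using assms(3) by (simp add: matrix_vector_mult_def vec_eq_iff)
  ultimately have "(\<lambda>v. (mat_exp (v *\<^sub>R G) - (\<chi> i j. p $ j)) *v 1) = (\<lambda>v. 0)"
    by (simp add: fun_eq_iff matrix_vector_mult_diff_rdistrib)
  moreover have "drazin_trunc G p t *v 1 = integral {0..t} (\<lambda>v. (mat_exp (v *\<^sub>R G) - (\<chi> i j. p $ j)) *v 1)"
    unfolding drazin_trunc_def
    by (rule integral_linear[OF _ bounded_linear_matrix_vector_mult_left, unfolded o_def, symmetric])
      (intro integrable_continuous_interval continuous_intros continuous_on_mat_exp)
  ultimately show ?thesis
    by simp
qed

lemma integral_mat_exp_eq_drazin_trunc:
  assumes "0 \<le> t"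
  shows "integral {0..t} (\<lambda>v. mat_exp (v *\<^sub>R G)) = drazin_trunc G p t + t *\<^sub>R (\<chi> i j. p $ j)"
proof -
  have "(\<lambda>v. mat_exp (v *\<^sub>R G) - (\<chi> i j. p $ j)) integrable_on {0..t}"
    by (intro integrable_continuous_interval continuous_intros continuous_on_mat_exp)
  then have "integral {0..t} (\<lambda>v. (mat_exp (v *\<^sub>R G) - (\<chi> i j. p $ j)) + (\<chi> i j. p $ j)) =
      drazin_trunc G p t + integral {0..t} (\<lambda>v. \<chi> i j. p $ j)"
    unfolding drazin_trunc_def by (rule integral_add) (simp add: integrable_const_ivl)
  then show ?thesis
    using assms by simp
qed

section \<open>The covariance\<close>

lemma bounded_linear_weighted_vector_matrix_mult:
  "bounded_linear (\<lambda>A::real^'n^'m. \<Sum>j\<in>UNIV. c j * (p v* A) $ j)"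
  by (intro bounded_linear_sum bounded_linear_compose[OF bounded_linear_mult_right]
      bounded_linear_compose[OF bounded_linear_vec_nth]
      bounded_bilinear.bounded_linear_right[OF vector_matrix_mult_bounded_bilinear])

lemma suminf_weighted_vector_matrix_mult:
  fixes f :: "nat \<Rightarrow> real^'n^'m"
  assumes "summable f"
  shows "(\<Sum>k. \<Sum>j\<in>UNIV. c j * (p v* f k) $ j) = (\<Sum>j\<in>UNIV. c j * (p v* suminf f) $ j)"
  using bounded_linear.suminf[OF bounded_linear_weighted_vector_matrix_mult assms] by simp

lemma sum_vector_matrix_mult_eq_0:
  assumes "A *v 1 = 0"
  shows "(\<Sum>j\<in>UNIV. (x v* A) $ j) = 0"
proof -
  have "(\<Sum>j\<in>UNIV. (x v* A) $ j) = (\<Sum>i\<in>UNIV. x $ i * (A *v 1) $ i)"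
    unfolding vector_matrix_mult_def matrix_vector_mult_def
    by (simp add: sum_distrib_left) (rule sum.swap)
  then show ?thesis
    using assms by simp
qed

lemma vector_matrix_mult_const_rows: "q v* (\<chi> i. p) = (\<Sum>i\<in>UNIV. q $ i) *\<^sub>R p"
  by (simp add: vector_matrix_mult_def vec_eq_iff sum_distrib_right)

lemma map_cov_eq_moments:
  fixes L0 L1 :: "real^'n^'n"
  assumes stat: "p v* (L0 + L1) = 0" and "0 \<le> t"
  shows "map_cov L0 L1 p lab t =
    (\<Sum>j\<in>UNIV. real (lab j) * (p v* map_P_moment L0 L1 t) $ j) -
    (\<Sum>j\<in>UNIV. (p v* map_P_moment L0 L1 t) $ j) * (\<Sum>j\<in>UNIV. real (lab j) * p $ j)"
proof -
  note moment_series = suminf_weighted_vector_matrix_mult[OF summable_map_P_moment[OF \<open>0 \<le> t\<close>]]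
  have "(\<Sum>k. \<Sum>j\<in>UNIV. real k * real (lab j) * map_joint L0 L1 p t k j) =
      (\<Sum>j\<in>UNIV. real (lab j) * (p v* map_P_moment L0 L1 t) $ j)"
    using moment_series[of "\<lambda>j. real (lab j)" p]
    by (simp add: map_joint_def map_P_moment_def vector_scaleR_matrix_ac mult_ac)
  moreover have "(\<Sum>k. \<Sum>j\<in>UNIV. real k * map_joint L0 L1 p t k j) =
      (\<Sum>j\<in>UNIV. (p v* map_P_moment L0 L1 t) $ j)"
    using moment_series[of "\<lambda>_. 1" p] by (simp add: map_joint_def map_P_moment_def vector_scaleR_matrix_ac)
  moreover have "(\<Sum>k. \<Sum>j\<in>UNIV. real (lab j) * map_joint L0 L1 p t k j) = (\<Sum>j\<in>UNIV. real (lab j) * p $ j)"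
    using suminf_weighted_vector_matrix_mult[OF summable_map_P[OF \<open>0 \<le> t\<close>], of "\<lambda>j. real (lab j)" p]
      stationary_map_P_sum[OF stat \<open>0 \<le> t\<close>]
    by (simp add: map_joint_def map_P_sum_def)
  ultimately show ?thesis
    by (simp add: map_cov_def)
qed

text \<open>The first moment grows like \<open>t\<close> times the stationary event rate in every phase, and
  this linear part cancels in the covariance.\<close>

lemma map_cov_eq_drazin_trunc:
  fixes L0 L1 :: "real^'n^'n"
  assumes row_sums: "(L0 + L1) *v 1 = 0" and stat: "p v* (L0 + L1) = 0"
    and mass: "(\<Sum>i\<in>UNIV. p $ i) = 1" and "0 \<le> t"
  shows "map_cov L0 L1 p lab t =
    (\<Sum>j\<in>UNIV. real (lab j) * ((p v* L1) v* drazin_trunc (L0 + L1) p t) $ j)"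
proof -
  define q where "q = p v* L1"
  define D where "D = drazin_trunc (L0 + L1) p t"
  define rate where "rate = t * (\<Sum>i\<in>UNIV. q $ i)"
  have moment: "p v* map_P_moment L0 L1 t = q v* D + rate *\<^sub>R p"
    using stationary_map_P_moment[OF stat \<open>0 \<le> t\<close>]
      integral_mat_exp_eq_drazin_trunc[OF \<open>0 \<le> t\<close>, of "L0 + L1" p]
    by (simp add: q_def D_def rate_def vector_matrix_mult_add_rdistrib vector_scaleR_matrix_ac
        vector_matrix_mult_const_rows)
  have "(\<Sum>j\<in>UNIV. (q v* D) $ j) = 0"
    unfolding D_def
    by (rule sum_vector_matrix_mult_eq_0[OF drazin_trunc_mult_one_vector[OF \<open>0 \<le> t\<close> row_sums mass]])
  then have "(\<Sum>j\<in>UNIV. (p v* map_P_moment L0 L1 t) $ j) = rate"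
    by (simp add: moment sum.distrib sum_distrib_left[symmetric] mass)
  moreover have "(\<Sum>j\<in>UNIV. real (lab j) * (p v* map_P_moment L0 L1 t) $ j) =
      (\<Sum>j\<in>UNIV. real (lab j) * (q v* D) $ j) + rate * (\<Sum>j\<in>UNIV. real (lab j) * p $ j)"
    by (simp add: moment distrib_left sum.distrib sum_distrib_left mult.left_commute)
  ultimately show ?thesis
    by (simp add: map_cov_eq_moments[OF stat \<open>0 \<le> t\<close>] q_def D_def)
qed

lemma is_MAP_off_diag_nonneg: "is_MAP L0 L1 \<Longrightarrow> i \<noteq> j \<Longrightarrow> 0 \<le> (L0 + L1) $ i $ j"
  by (simp add: is_MAP_def add_nonneg_nonneg)

lemma is_MAP_row_sums: "is_MAP L0 L1 \<Longrightarrow> (L0 + L1) *v 1 = 0"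
  by (simp add: is_MAP_def vec_eq_iff matrix_vector_mult_def)

theorem proposition3:
  fixes L0 L1 :: "real^'n^'n" and p :: "real^'n" and lab :: "'n \<Rightarrow> nat"
  assumes "is_MAP L0 L1"
    and "irreducible_gen (L0 + L1)"
    and "invertible L0"
    and "bij_betw lab UNIV {1..CARD('n)}"
    and "p v* (L0 + L1) = 0"
    and "(\<Sum>i\<in>UNIV. p $ i) = 1"
  shows "((\<lambda>t. map_cov L0 L1 p lab t) \<longlongrightarrow>
           (\<Sum>j\<in>UNIV. real (lab j) * (p v* (L1 ** drazin (L0 + L1) p)) $ j)) at_top"
proof -
  note off_diag = is_MAP_off_diag_nonneg[OF assms(1)] and row_sums = is_MAP_row_sums[OF assms(1)]
  obtain C a
    where "\<And>t i j. 0 \<le> t \<Longrightarrow> \<bar>mat_exp (t *\<^sub>R (L0 + L1)) $ i $ j - p $ j\<bar> \<le> C * exp (- a * t)"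
      and "0 < a"
    using irreducible_generator_mat_exp_converges[OF off_diag row_sums assms(2,5,6)] by blast
  then have "(drazin_trunc (L0 + L1) p \<longlongrightarrow> drazin (L0 + L1) p) at_top"
    using drazin_trunc_tendsto by blast
  then have "((\<lambda>t. \<Sum>j\<in>UNIV. real (lab j) * ((p v* L1) v* drazin_trunc (L0 + L1) p t) $ j) \<longlongrightarrow>
      (\<Sum>j\<in>UNIV. real (lab j) * ((p v* L1) v* drazin (L0 + L1) p) $ j)) at_top"
    by (rule bounded_linear.tendsto[OF bounded_linear_weighted_vector_matrix_mult])
  moreover have "\<forall>\<^sub>F t in at_top.
      (\<Sum>j\<in>UNIV. real (lab j) * ((p v* L1) v* drazin_trunc (L0 + L1) p t) $ j) = map_cov L0 L1 p lab t"
    using eventually_ge_at_top[of 0]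
    by (rule eventually_mono) (rule map_cov_eq_drazin_trunc[OF row_sums assms(5,6), symmetric])
  ultimately have "((\<lambda>t. map_cov L0 L1 p lab t) \<longlongrightarrow>
      (\<Sum>j\<in>UNIV. real (lab j) * ((p v* L1) v* drazin (L0 + L1) p) $ j)) at_top"
    by (rule Lim_transform_eventually)
  then show ?thesis
    by (simp only: vector_matrix_mul_assoc)
qed

end
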